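(* Assume $\eta_1\le\frac{1}{4k(T_1+1)}$ and $0<r\le\frac{\eta_1}{200}$. With probability at least $1-4e^{-m/36}$ over the sample $S$, the following holds for every realization of the initialization: for all $0\le t\le T_1$ and all $i\in\mathcal{W}_0^+\cap\mathcal{A}^+$, (1) $o_1\cdot w_i^{(t)}\ge \frac{t\eta_1}{9}$; (2) $o_j\cdot w_i^{(t)}\le r$ for all $j\ne1$; and (3) $p_i^{(t)}(x)=o_1$ for every $x\in S_1^+$.
   Context: Fix $n\ge1$, $d\ge3$ and orthonormal $o_1,\dots,o_d\in\mathbb{R}^d$. Inputs are $x=(x[1],\dots,x[n])\in\mathbb{R}^{nd}$ with $x[j]\in\mathbb{R}^d$. The distribution $\mathcal{D}$ on $\mathbb{R}^{nd}\times\{\pm1\}$: $y$ uniform on $\{\pm1\}$; given $y=1$, an index $j_+$ uniform on $\{1,\dots,n\}$ is drawn, $x[j_+]=o_1$, and for $j\ne j_+$ independently $x[j]=o_{i_j}$, $i_j$ uniform on $\{3,\dots,d\}$; given $y=-1$, the same with $o_2$ instead of $o_1$. Network $N_{(W,a)}(x)=\sum_{i=1}^k a_i\max_j\sigma(w_i\cdot x[j])$, $\sigma(z)=\max\{0,z\}$, with $w_i$ the rows of $W\in\mathbb{R}^{k\times d}$. Loss $\ell(z)=\log(1+e^{-z})$. $S$ consists of $m$ i.i.d. samples from $\mathcal{D}$; $S_1$ is its first $\lceil m/2\rceil$ samples, $m_1=|S_1|$, $S_1^+=\{x:(x,1)\in S_1\}$, $S_1^-=\{x:(x,-1)\in S_1\}$,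 and $\mathcal{L}_1(W,a)=\frac{1}{m_1}\sum_{(x,y)\in S_1}\ell(yN_{(W,a)}(x))$. Initialization: each $w_i^{(0)}$ has norm $r$ (drawn uniformly on the radius-$r$ sphere) and each $a_i^{(0)}\in\{\pm1\}$. First-layer iterates: $W^{(t)}=W^{(t-1)}-\eta_1\nabla_W\mathcal{L}_1(W^{(t-1)},a^{(0)})$ for $t=1,\dots,T_1$, with $w_i^{(t)}$ the rows of $W^{(t)}$. Define $p_i^{(t)}(x)=x[j^*]$ where $j^*\in\arg\max_j w_i^{(t)}\cdot x[j]$, if $w_i^{(t)}\cdot x[j^*]>0$, and $p_i^{(t)}(x)=0$ otherwise; the gradient uses the convention $\frac{\partial}{\partial w_i}\max_j\sigma(w_i\cdot x[j])=p_i(x)$ (so $\max_j\sigma(w_i^{(t)}\cdot x[j])=w_i^{(t)}\cdot p_i^{(t)}(x)$). Sets: $\mathcal{A}^+=\{i:a_i^{(0)}=1\}$ and $\mathcal{W}_0^+=\{i:\arg\max_{l\in\{1,3,4,\dots,d\}}w_i^{(0)}\cdot o_l=1,\ w_i^{(0)}\cdot o_1>0\}$. *)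

theory Defs
  imports "HOL-Analysis.Analysis" "HOL-Probability.Probability" "HOL-Library.Monad_Syntax"
begin

text \<open>Conventions: the ambient space R^d is the type real^'d with d = CARD('d).
 The orthonormal vectors o_1..o_d are a function o :: nat => real^'d (indices 1..d).
 An input x = (x[1],...,x[n]) is a list of length n (list positions 0..n-1).
 First-layer weights W are given by their rows W i, i = 1..k; second layer a i, i = 1..k.\<close>

type_synonym 'd sample = "(real^'d) list \<times> real"

definition data_dist :: "nat \<Rightarrow> (nat \<Rightarrow> real^'d) \<Rightarrow> 'd sample pmf" where
  "data_dist n ov = do {
     y \<leftarrow> pmf_of_set {1, -1::real};
     jp \<leftarrow> pmf_of_set {0..<n};
     ids \<leftarrow> replicate_pmf n (pmf_of_set {3..CARD('d)});
     return_pmf (map (\<lambda>j. if j = jp then ov (if y = 1 then 1 else 2) else ov (ids ! j)) [0..<n], y)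
   }"

definition logloss :: "real \<Rightarrow> real" where
  "logloss z = ln (1 + exp (- z))"

definition network :: "nat \<Rightarrow> (nat \<Rightarrow> real^'d) \<Rightarrow> (nat \<Rightarrow> real) \<Rightarrow> (real^'d) list \<Rightarrow> real" where
  "network k W a x = (\<Sum>i = 1..k. a i * Max ((\<lambda>v. max 0 (W i \<bullet> v)) ` set x))"

definition patch :: "real^'d \<Rightarrow> (real^'d) list \<Rightarrow> real^'d" where
  "patch w x =
     (let M = Max ((\<lambda>v. w \<bullet> v) ` set x);
          js = (LEAST j. j < length x \<and> w \<bullet> (x ! j) = M)
      in if M > 0 then x ! js else 0)"

definition grad_row :: "nat \<Rightarrow> 'd sample list \<Rightarrow> (nat \<Rightarrow> real^'d) \<Rightarrow> (nat \<Rightarrow> real) \<Rightarrow> nat \<Rightarrow> real^'d" where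
  "grad_row k S1 W a i =
     (1 / real (length S1)) *\<^sub>R
       sum_list (map (\<lambda>(x, y). (deriv logloss (y * network k W a x) * y * a i) *\<^sub>R patch (W i) x) S1)"

primrec gd_iter :: "nat \<Rightarrow> real \<Rightarrow> 'd sample list \<Rightarrow> (nat \<Rightarrow> real) \<Rightarrow> (nat \<Rightarrow> real^'d) \<Rightarrow> nat \<Rightarrow> (nat \<Rightarrow> real^'d)" where
  "gd_iter k eta S1 a W0 0 = W0"
| "gd_iter k eta S1 a W0 (Suc t) =
     (\<lambda>i. gd_iter k eta S1 a W0 t i - eta *\<^sub>R grad_row k S1 (gd_iter k eta S1 a W0 t) a i)"

definition first_half :: "'a list \<Rightarrow> 'a list" where
  "first_half S = take (nat \<lceil>real (length S) / 2\<rceil>) S"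

definition in_W0plus :: "(nat \<Rightarrow> real^'d) \<Rightarrow> real^'d \<Rightarrow> bool" where
  "in_W0plus ov w \<longleftrightarrow> w \<bullet> ov 1 > 0 \<and> (\<forall>l \<in> {3..CARD('d)}. w \<bullet> ov l < w \<bullet> ov 1)"

end

theory Submission
  imports Defs
begin

text \<open>For a neuron i in W_0^+ with a_i = 1, the patch it selects is o_1 on every positive
sample and either 0 or some o_j with j \<ge> 2 on every negative sample. Hence each gradient
step can only increase o_1 \<cdot> w_i and decrease o_j \<cdot> w_i for j \<ge> 2, so w_i stays in W_0^+;
this gives (2) and (3). Each step moves every row by at most \<eta>_1, so the network output
stays below 1/4 and the logistic weight of each positive sample stays above 1/3. If at least
a third of S_1 is positive, o_1 \<cdot> w_i therefore gains at least \<eta>_1/9 per step, which is (1).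
The number of positive samples in S_1 is binomial, and Hoeffding's inequality bounds the
probability that fewer than a third are positive by exp (-m/36).\<close>

definition logistic_weight :: "real \<Rightarrow> real" where
  "logistic_weight z = 1 / (1 + exp z)"

lemma deriv_logloss: "deriv logloss z = - logistic_weight z"
proof -
  have "(logloss has_real_derivative (- exp (-z) / (1 + exp (-z)))) (at z)"
    unfolding logloss_def[abs_def]
    by (rule derivative_eq_intros refl | simp add: add_pos_pos)+
  then have "deriv logloss z = - exp (-z) / (1 + exp (-z))"
    by (rule DERIV_imp_deriv)
  then show ?thesis
    by (simp add: logistic_weight_def exp_minus field_simps)
qed

lemma logistic_weight_pos: "0 < logistic_weight z"
  unfolding logistic_weight_def by (simp add: add_pos_pos)

lemma logistic_weight_le_one: "logistic_weight z \<le> 1"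
  unfolding logistic_weight_def by (simp add: add_pos_pos)

lemma logistic_weight_ge_one_third:
  assumes "z \<le> 1/4"
  shows "1/3 \<le> logistic_weight z"
proof -
  have "1/4 \<le> ln (2::real)"
    using ln2_ge_two_thirds by simp
  with assms have "exp z \<le> 2"
    by (metis exp_le_cancel_iff exp_ln order_trans zero_less_numeral)
  then show ?thesis
    unfolding logistic_weight_def by (simp add: add_pos_pos le_divide_eq)
qed

lemma inner_sum_list_right: "u \<bullet> sum_list vs = sum_list (map (\<lambda>v. u \<bullet> v) vs)"
  by (induction vs) (simp_all add: inner_add_right)

lemma norm_sum_list_map_le:
  fixes f :: "'a \<Rightarrow> 'b::real_normed_vector"
  assumes "\<forall>x\<in>set xs. norm (f x) \<le> c"
  shows "norm (sum_list (map f xs)) \<le> real (length xs) * c"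
  using assms
proof (induction xs)
  case (Cons x xs)
  then have "norm (f x + sum_list (map f xs)) \<le> c + real (length xs) * c"
    by (meson add_mono list.set_intros norm_triangle_ineq order_trans)
  then show ?case by (simp add: algebra_simps)
qed simp

lemma sum_list_map_indicator:
  "sum_list (map (\<lambda>x. if P x then c else 0) xs) = real (length (filter P xs)) * (c::real)"
  by (induction xs) (simp_all add: algebra_simps)

lemma sum_list_uminus_map:
  "sum_list (map (\<lambda>x. - f x) xs) = - sum_list (map f xs :: 'a::ab_group_add list)"
  by (induction xs) simp_all

lemma patch_eq_strict_argmax:
  assumes "u \<in> set x" "0 < w \<bullet> u" "\<forall>v\<in>set x. v \<noteq> u \<longrightarrow> w \<bullet> v < w \<bullet> u"
  shows "patch w x = u"
proof -
  have max_eq: "Max ((\<lambda>v. w \<bullet> v) ` set x) = w \<bullet> u"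
    using assms by (intro Max_eqI) force+
  obtain j0 where j0: "j0 < length x" "x ! j0 = u"
    using assms(1) by (metis in_set_conv_nth)
  define js where "js = (LEAST j. j < length x \<and> w \<bullet> (x ! j) = w \<bullet> u)"
  have "js < length x \<and> w \<bullet> (x ! js) = w \<bullet> u"
    unfolding js_def by (rule LeastI[of _ j0]) (use j0 in auto)
  then have "x ! js = u"
    using assms(3) by (metis less_irrefl nth_mem)
  then show ?thesis
    unfolding patch_def Let_def max_eq js_def[symmetric] using assms(2) by simp
qed

lemma patch_in_set_or_zero:
  assumes "x \<noteq> []"
  shows "patch w x \<in> insert 0 (set x)"
proof -
  define M where "M = Max ((\<lambda>v. w \<bullet> v) ` set x)"
  have "M \<in> (\<lambda>v. w \<bullet> v) ` set x"
    unfolding M_def using assms by (intro Max_in) auto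
  then obtain j0 where j0: "j0 < length x" "w \<bullet> x ! j0 = M"
    by (metis imageE in_set_conv_nth)
  have "(LEAST j. j < length x \<and> w \<bullet> (x ! j) = M) < length x"
    by (rule LeastI2[of _ j0]) (use j0 in auto)
  then show ?thesis
    unfolding patch_def Let_def M_def[symmetric] by auto
qed

lemma network_le_sum_norm:
  assumes "x \<noteq> []" "\<forall>v\<in>set x. norm v \<le> 1" "\<forall>i\<in>{1..k}. \<bar>a i\<bar> \<le> 1"
  shows "network k W a x \<le> (\<Sum>i=1..k. norm (W i))"
  unfolding network_def
proof (rule sum_mono)
  fix i assume i: "i \<in> {1..k}"
  let ?A = "(\<lambda>v. max 0 (W i \<bullet> v)) ` set x"
  obtain v0 where "v0 \<in> set x"
    using assms(1) by (meson list.set_sel(1))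
  then have "max 0 (W i \<bullet> v0) \<le> Max ?A"
    by (intro Max_ge) auto
  then have M_nonneg: "0 \<le> Max ?A"
    by linarith
  have M_le: "Max ?A \<le> norm (W i)"
  proof (subst Max_le_iff, safe)
    fix v assume "v \<in> set x"
    then have "norm (W i) * norm v \<le> norm (W i)"
      using assms(2) by (simp add: mult_left_le)
    then show "max 0 (W i \<bullet> v) \<le> norm (W i)"
      using norm_cauchy_schwarz[of "W i" v] by simp
  qed (use assms(1) in auto)
  have "a i * Max ?A \<le> \<bar>a i\<bar> * Max ?A"
    using M_nonneg by (intro mult_right_mono) auto
  also have "\<dots> \<le> Max ?A"
    using assms(3) i M_nonneg by (intro mult_left_le_one_le) auto
  finally show "a i * Max ?A \<le> norm (W i)"
    using M_le by linarith
qed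

lemma inner_gd_step:
  "u \<bullet> (W i - eta *\<^sub>R grad_row k S1 W a i) = u \<bullet> W i + eta / real (length S1) *
     sum_list (map (\<lambda>(x, y). logistic_weight (y * network k W a x) * y * a i * (u \<bullet> patch (W i) x)) S1)"
proof -
  have "u \<bullet> grad_row k S1 W a i = - (1 / real (length S1)) *
     sum_list (map (\<lambda>(x, y). logistic_weight (y * network k W a x) * y * a i * (u \<bullet> patch (W i) x)) S1)"
    unfolding grad_row_def inner_scaleR_right inner_sum_list_right deriv_logloss
    by (simp add: o_def case_prod_unfold sum_list_uminus_map)
  then show ?thesis
    by (simp add: inner_diff_right)
qed

lemma norm_grad_row_le_one:
  assumes "\<forall>(x, y)\<in>set S1. \<bar>y\<bar> \<le> 1 \<and> norm (patch (W i) x) \<le> 1" "\<bar>a i\<bar> \<le> 1"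
  shows "norm (grad_row k S1 W a i) \<le> 1"
proof -
  let ?f = "\<lambda>(x, y). (deriv logloss (y * network k W a x) * y * a i) *\<^sub>R patch (W i) x"
  have "\<forall>z\<in>set S1. norm (?f z) \<le> 1"
  proof
    fix z assume "z \<in> set S1"
    then obtain x y where z: "z = (x, y)" "\<bar>y\<bar> \<le> 1" "norm (patch (W i) x) \<le> 1"
      using assms(1) by (cases z) auto
    have "norm (?f z) = logistic_weight (y * network k W a x) * \<bar>y\<bar> * \<bar>a i\<bar> * norm (patch (W i) x)"
      using z(1) by (simp add: deriv_logloss abs_mult abs_of_pos[OF logistic_weight_pos])
    also have "\<dots> \<le> 1 * 1 * 1 * 1"
      using z(2,3) assms(2) logistic_weight_le_one logistic_weight_pos
      by (intro mult_mono) (auto simp: less_imp_le)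
    finally show "norm (?f z) \<le> 1" by simp
  qed
  then have "norm (sum_list (map ?f S1)) \<le> real (length S1)"
    using norm_sum_list_map_le[of S1 ?f 1] by simp
  then have "norm (sum_list (map ?f S1)) / real (length S1) \<le> 1"
    by (cases "S1 = []") (simp_all add: divide_le_eq)
  then show ?thesis
    unfolding grad_row_def by simp
qed

definition orthonormal_family :: "(nat \<Rightarrow> real^'d) \<Rightarrow> bool" where
  "orthonormal_family ov \<longleftrightarrow>
     (\<forall>i\<in>{1..CARD('d)}. \<forall>j\<in>{1..CARD('d)}. ov i \<bullet> ov j = (if i = j then 1 else 0))"

definition admissible_sample :: "(nat \<Rightarrow> real^'d) \<Rightarrow> 'd sample \<Rightarrow> bool" where
  "admissible_sample ov z \<longleftrightarrow> fst z \<noteq> [] \<and>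
     (snd z = 1 \<and> ov 1 \<in> set (fst z) \<and> set (fst z) \<subseteq> ov ` ({1} \<union> {3..CARD('d)}) \<or>
      snd z = -1 \<and> set (fst z) \<subseteq> ov ` {2..CARD('d)})"

lemma admissible_sample_data_dist:
  fixes ov :: "nat \<Rightarrow> real^'d"
  assumes "CARD('d) \<ge> 3" "n \<ge> 1" "z \<in> set_pmf (data_dist n ov)"
  shows "admissible_sample ov z"
proof -
  have labels: "set_pmf (pmf_of_set {1, -1::real}) = {1, -1}"
    by (rule set_pmf_of_set) auto
  have positions: "set_pmf (pmf_of_set {0..<n}) = {0..<n}"
    using assms(2) by (intro set_pmf_of_set) auto
  have indices: "set_pmf (pmf_of_set {3..CARD('d)}) = {3..CARD('d)}"
    using assms(1) by (intro set_pmf_of_set) auto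
  have "\<exists>y\<in>{1, -1::real}. \<exists>jp\<in>{0..<n}. \<exists>ids\<in>{xs \<in> lists {3..CARD('d)}. length xs = n}.
      z = (map (\<lambda>j. if j = jp then ov (if y = 1 then 1 else 2) else ov (ids ! j)) [0..<n], y)"
    using assms(3)
    unfolding data_dist_def set_bind_pmf set_return_pmf set_replicate_pmf labels positions indices
    by (simp only: UN_iff singleton_iff)
  then obtain y jp ids where y: "y \<in> {1, -1}" and jp: "jp < n"
    and ids: "ids \<in> lists {3..CARD('d)}" "length ids = n"
    and z: "z = (map (\<lambda>j. if j = jp then ov (if y = 1 then 1 else 2) else ov (ids ! j)) [0..<n], y)"
    by (simp only: mem_Collect_eq atLeastLessThan_iff Bex_def) blast
  let ?o = "ov (if y = 1 then 1 else 2)"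
  have ids_range: "ids ! j \<in> {3..CARD('d)}" if "j < n" for j
    using ids that by (metis in_listsD nth_mem)
  have patches: "set (fst z) \<subseteq> insert ?o (ov ` {3..CARD('d)})"
  proof
    fix v assume "v \<in> set (fst z)"
    then obtain j where "j < n" "v = (if j = jp then ?o else ov (ids ! j))"
      using z by auto
    then show "v \<in> insert ?o (ov ` {3..CARD('d)})"
      using ids_range by (cases "j = jp") auto
  qed
  have signal: "?o \<in> set (fst z)"
    using z jp by (auto intro!: image_eqI[of _ _ jp])
  have nonempty: "fst z \<noteq> []"
    using signal by auto
  have label: "snd z = y"
    using z by simp
  from y consider "y = 1" | "y = -1"
    by blast
  then show ?thesis
  proof cases
    case 1
    have "insert (ov 1) (ov ` {3..CARD('d)}) = ov ` ({1} \<union> {3..CARD('d)})"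
      by simp
    then show ?thesis
      unfolding admissible_sample_def using 1 label nonempty patches signal by simp
  next
    case 2
    have "insert (ov 2) (ov ` {3..CARD('d)}) \<subseteq> ov ` {2..CARD('d)}"
      using assms(1) by auto
    then show ?thesis
      unfolding admissible_sample_def using 2 label nonempty patches by auto
  qed
qed

lemma admissible_sample_label:
  "admissible_sample ov (x, y) \<Longrightarrow> y = 1 \<or> y = -1"
  unfolding admissible_sample_def by auto

lemma norm_le_one_if_admissible_sample:
  fixes ov :: "nat \<Rightarrow> real^'d"
  assumes "orthonormal_family ov" "admissible_sample ov (x, y)" "v \<in> set x"
  shows "norm v \<le> 1"
proof -
  have "set x \<subseteq> ov ` {1..CARD('d)}"
    using assms(2) unfolding admissible_sample_def by force
  then obtain l where "l \<in> {1..CARD('d)}" "v = ov l"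
    using assms(3) by blast
  then show ?thesis
    using assms(1) unfolding orthonormal_family_def by (simp add: norm_eq_sqrt_inner)
qed

lemma norm_patch_le_one_if_admissible_sample:
  fixes ov :: "nat \<Rightarrow> real^'d"
  assumes "orthonormal_family ov" "admissible_sample ov (x, y)"
  shows "norm (patch w x) \<le> 1"
  using patch_in_set_or_zero[of x w] norm_le_one_if_admissible_sample[OF assms] assms(2)
  unfolding admissible_sample_def by auto

lemma patch_positive_sample:
  assumes "in_W0plus ov w" "admissible_sample ov (x, 1)"
  shows "patch w x = ov 1"
proof (rule patch_eq_strict_argmax)
  show "ov 1 \<in> set x" "0 < w \<bullet> ov 1"
    using assms unfolding admissible_sample_def in_W0plus_def by auto
  show "\<forall>v\<in>set x. v \<noteq> ov 1 \<longrightarrow> w \<bullet> v < w \<bullet> ov 1"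
    using assms unfolding admissible_sample_def in_W0plus_def by fastforce
qed

lemma patch_negative_sample:
  fixes ov :: "nat \<Rightarrow> real^'d"
  assumes "admissible_sample ov (x, -1)"
  shows "patch w x \<in> insert 0 (ov ` {2..CARD('d)})"
  using assms patch_in_set_or_zero[of x w] unfolding admissible_sample_def by auto

lemma label_times_inner_patch_first:
  fixes ov :: "nat \<Rightarrow> real^'d"
  assumes "orthonormal_family ov" "in_W0plus ov w" "admissible_sample ov (x, y)"
  shows "y * (ov 1 \<bullet> patch w x) = (if y = 1 then 1 else 0)"
proof (cases "y = 1")
  case True
  then show ?thesis
    using assms patch_positive_sample[of ov w x] unfolding orthonormal_family_def by simp
next
  case False
  then have "y = -1"
    using admissible_sample_label[OF assms(3)] by simp
  then show ?thesis
    using assms(1) patch_negative_sample[of ov x w] assms(3)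
    unfolding orthonormal_family_def by auto
qed

lemma label_times_inner_patch_other_nonpos:
  fixes ov :: "nat \<Rightarrow> real^'d"
  assumes "orthonormal_family ov" "in_W0plus ov w" "admissible_sample ov (x, y)"
    and "j \<in> {2..CARD('d)}"
  shows "y * (ov j \<bullet> patch w x) \<le> 0"
proof (cases "y = 1")
  case True
  then show ?thesis
    using assms patch_positive_sample[of ov w x] unfolding orthonormal_family_def by simp
next
  case False
  then have "y = -1"
    using admissible_sample_label[OF assms(3)] by simp
  then show ?thesis
    using assms(1,4) patch_negative_sample[of ov x w] assms(3)
    unfolding orthonormal_family_def by auto
qed

lemma gd_step_mono_coordinates:
  fixes ov :: "nat \<Rightarrow> real^'d"
  assumes orth: "orthonormal_family ov" and adm: "\<forall>z\<in>set S1. admissible_sample ov z"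
    and w: "in_W0plus ov (W i)" and ai: "a i = 1" and eta: "0 \<le> eta"
  shows "ov 1 \<bullet> W i \<le> ov 1 \<bullet> (W i - eta *\<^sub>R grad_row k S1 W a i)"
    and "j \<in> {2..CARD('d)} \<Longrightarrow> ov j \<bullet> (W i - eta *\<^sub>R grad_row k S1 W a i) \<le> ov j \<bullet> W i"
proof -
  let ?s = "\<lambda>u. sum_list (map (\<lambda>(x, y).
     logistic_weight (y * network k W a x) * y * a i * (u \<bullet> patch (W i) x)) S1)"
  have factor: "logistic_weight (y * network k W a x) * y * a i * (u \<bullet> patch (W i) x)
      = logistic_weight (y * network k W a x) * (y * (u \<bullet> patch (W i) x))" for x y u
    using ai by simp
  have "0 \<le> ?s (ov 1)"
    using adm label_times_inner_patch_first[OF orth w] logistic_weight_pos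
    by (intro sum_list_nonneg) (auto simp: factor less_imp_le)
  then show "ov 1 \<bullet> W i \<le> ov 1 \<bullet> (W i - eta *\<^sub>R grad_row k S1 W a i)"
    unfolding inner_gd_step using eta by simp
  assume j: "j \<in> {2..CARD('d)}"
  have "?s (ov j) \<le> 0"
    using adm label_times_inner_patch_other_nonpos[OF orth w _ j] logistic_weight_pos
    by (intro sum_list_nonpos) (auto simp: factor mult_nonneg_nonpos less_imp_le)
  then have "eta / real (length S1) * ?s (ov j) \<le> 0"
    using eta mult_nonneg_nonpos[of "eta / real (length S1)" "?s (ov j)"] by simp
  then show "ov j \<bullet> (W i - eta *\<^sub>R grad_row k S1 W a i) \<le> ov j \<bullet> W i"
    unfolding inner_gd_step by simp
qed

lemma in_W0plus_if_mono_coordinates: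
  fixes ov :: "nat \<Rightarrow> real^'d"
  assumes "in_W0plus ov w" "ov 1 \<bullet> w \<le> ov 1 \<bullet> w'" "\<forall>j\<in>{3..CARD('d)}. ov j \<bullet> w' \<le> ov j \<bullet> w"
  shows "in_W0plus ov w'"
  using assms unfolding in_W0plus_def by (fastforce simp: inner_commute)

lemma gd_iter_mono_coordinates:
  fixes ov :: "nat \<Rightarrow> real^'d"
  assumes orth: "orthonormal_family ov" and adm: "\<forall>z\<in>set S1. admissible_sample ov z"
    and w0: "in_W0plus ov (W0 i)" and ai: "a i = 1" and eta: "0 \<le> eta"
  shows "in_W0plus ov (gd_iter k eta S1 a W0 t i) \<and>
    ov 1 \<bullet> W0 i \<le> ov 1 \<bullet> gd_iter k eta S1 a W0 t i \<and>
    (\<forall>j\<in>{2..CARD('d)}. ov j \<bullet> gd_iter k eta S1 a W0 t i \<le> ov j \<bullet> W0 i)"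
proof (induction t)
  case 0
  then show ?case using w0 by simp
next
  case (Suc t)
  let ?W = "gd_iter k eta S1 a W0 t"
  let ?w = "gd_iter k eta S1 a W0 (Suc t) i"
  have IH_in: "in_W0plus ov (?W i)" and IH_first: "ov 1 \<bullet> W0 i \<le> ov 1 \<bullet> ?W i"
    and IH_other: "\<forall>j\<in>{2..CARD('d)}. ov j \<bullet> ?W i \<le> ov j \<bullet> W0 i"
    using Suc.IH by blast+
  have first: "ov 1 \<bullet> ?W i \<le> ov 1 \<bullet> ?w"
    and other: "\<forall>j\<in>{2..CARD('d)}. ov j \<bullet> ?w \<le> ov j \<bullet> ?W i"
    using gd_step_mono_coordinates[where W = ?W and i = i and a = a, OF orth adm IH_in ai eta]
    by simp_all
  have "in_W0plus ov ?w"
    using other by (intro in_W0plus_if_mono_coordinates[where w = "?W i", OF IH_in first]) auto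
  moreover have "ov 1 \<bullet> W0 i \<le> ov 1 \<bullet> ?w"
    using IH_first first by linarith
  moreover have "\<forall>j\<in>{2..CARD('d)}. ov j \<bullet> ?w \<le> ov j \<bullet> W0 i"
    using IH_other other by force
  ultimately show ?case
    by blast
qed

lemma norm_gd_iter_le:
  fixes ov :: "nat \<Rightarrow> real^'d"
  assumes orth: "orthonormal_family ov" and adm: "\<forall>z\<in>set S1. admissible_sample ov z"
    and ai: "\<bar>a i\<bar> \<le> 1" and eta: "0 \<le> eta"
  shows "norm (gd_iter k eta S1 a W0 t i) \<le> norm (W0 i) + real t * eta"
proof (induction t)
  case 0
  then show ?case by simp
next
  case (Suc t)
  let ?W = "gd_iter k eta S1 a W0 t"
  have "\<forall>(x, y)\<in>set S1. \<bar>y\<bar> \<le> 1 \<and> norm (patch (?W i) x) \<le> 1"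
    using adm admissible_sample_label norm_patch_le_one_if_admissible_sample[OF orth] by fastforce
  then have "norm (eta *\<^sub>R grad_row k S1 ?W a i) \<le> eta"
    using norm_grad_row_le_one[where W = ?W and i = i and a = a, OF _ ai] eta by (simp add: mult_left_le)
  moreover have "norm (?W i - eta *\<^sub>R grad_row k S1 ?W a i)
      \<le> norm (?W i) + norm (eta *\<^sub>R grad_row k S1 ?W a i)"
    by (rule norm_triangle_ineq4)
  ultimately have "norm (gd_iter k eta S1 a W0 (Suc t) i) \<le> norm (?W i) + eta"
    by simp
  then show ?case
    using Suc.IH by (simp add: algebra_simps)
qed

lemma gd_step_first_coordinate_gain:
  fixes ov :: "nat \<Rightarrow> real^'d"
  assumes orth: "orthonormal_family ov" and adm: "\<forall>z\<in>set S1. admissible_sample ov z"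
    and w: "in_W0plus ov (W i)" and ai: "a i = 1" and eta: "0 \<le> eta" and S1: "S1 \<noteq> []"
    and third: "real (length S1) \<le> 3 * real (length (filter (\<lambda>z. snd z = 1) S1))"
    and small: "\<forall>x. (x, 1) \<in> set S1 \<longrightarrow> network k W a x \<le> 1/4"
  shows "ov 1 \<bullet> W i + eta / 9 \<le> ov 1 \<bullet> (W i - eta *\<^sub>R grad_row k S1 W a i)"
proof -
  let ?term = "\<lambda>(x, y). logistic_weight (y * network k W a x) * y * a i * (ov 1 \<bullet> patch (W i) x)"
  have "(if snd z = 1 then 1/3 else 0) \<le> ?term z" if "z \<in> set S1" for z
  proof -
    obtain x y where z: "z = (x, y)" by fastforce
    have "?term z = logistic_weight (y * network k W a x) * (y * (ov 1 \<bullet> patch (W i) x))"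
      using z ai by simp
    also have "\<dots> = logistic_weight (y * network k W a x) * (if y = 1 then 1 else 0)"
      using label_times_inner_patch_first[OF orth w, of x y] adm that z by simp
    finally have term_eq: "?term z = logistic_weight (y * network k W a x) * (if y = 1 then 1 else 0)" .
    show ?thesis
      unfolding term_eq
      using logistic_weight_ge_one_third[of "network k W a x"] small that z
        logistic_weight_pos[of "y * network k W a x"] by auto
  qed
  then have "sum_list (map (\<lambda>z. if snd z = 1 then 1/3 else 0) S1) \<le> sum_list (map ?term S1)"
    by (rule sum_list_mono)
  then have "real (length S1) / 9 \<le> sum_list (map ?term S1)"
    using third by (simp add: sum_list_map_indicator)
  then have "eta / 9 \<le> eta / real (length S1) * sum_list (map ?term S1)"
    using eta S1 mult_left_mono[of "real (length S1) / 9" _ "eta / real (length S1)"] by simp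
  then show ?thesis
    unfolding inner_gd_step by simp
qed

lemma gd_iter_first_coordinate_growth:
  fixes ov :: "nat \<Rightarrow> real^'d"
  assumes orth: "orthonormal_family ov" and adm: "\<forall>z\<in>set S1. admissible_sample ov z"
    and w0: "in_W0plus ov (W0 i)" and ai: "a i = 1" and a: "\<forall>i\<in>{1..k}. \<bar>a i\<bar> \<le> 1"
    and norm_W0: "\<forall>i\<in>{1..k}. norm (W0 i) \<le> eta" and eta: "0 \<le> eta"
    and small_eta: "real k * real T * eta \<le> 1/4" and S1: "S1 \<noteq> []"
    and third: "real (length S1) \<le> 3 * real (length (filter (\<lambda>z. snd z = 1) S1))"
  shows "t \<le> T \<Longrightarrow> ov 1 \<bullet> W0 i + real t * eta / 9 \<le> ov 1 \<bullet> gd_iter k eta S1 a W0 t i"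
proof (induction t)
  case 0
  then show ?case by simp
next
  case (Suc t)
  let ?W = "gd_iter k eta S1 a W0 t"
  have "norm (?W l) \<le> real T * eta" if l: "l \<in> {1..k}" for l
  proof -
    have "norm (?W l) \<le> norm (W0 l) + real t * eta"
      using a l by (intro norm_gd_iter_le[OF orth adm]) (auto simp: eta)
    also have "\<dots> \<le> real (Suc t) * eta"
      using norm_W0 l by (simp add: algebra_simps)
    also have "\<dots> \<le> real T * eta"
      using Suc.prems eta by (intro mult_right_mono) auto
    finally show ?thesis .
  qed
  then have "(\<Sum>l=1..k. norm (?W l)) \<le> real k * (real T * eta)"
    using sum_bounded_above[of "{1..k}" "\<lambda>l. norm (?W l)" "real T * eta"] by simp
  then have small: "\<forall>x. (x, 1) \<in> set S1 \<longrightarrow> network k ?W a x \<le> 1/4"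
    using adm a small_eta network_le_sum_norm[of _ k a ?W]
      norm_le_one_if_admissible_sample[OF orth]
    unfolding admissible_sample_def by fastforce
  have "in_W0plus ov (?W i)"
    using gd_iter_mono_coordinates[where ?W0.0 = W0 and i = i and a = a, OF orth adm w0 ai eta] by blast
  then have gain: "ov 1 \<bullet> ?W i + eta / 9 \<le> ov 1 \<bullet> gd_iter k eta S1 a W0 (Suc t) i"
    using gd_step_first_coordinate_gain[where W = ?W and i = i and a = a, OF orth adm _ ai eta S1 third small]
    by simp
  moreover have "ov 1 \<bullet> W0 i + real t * eta / 9 \<le> ov 1 \<bullet> ?W i"
    using Suc by simp
  moreover have "real (Suc t) * eta / 9 = real t * eta / 9 + eta / 9"
    by (simp add: algebra_simps)
  ultimately show ?case
    by linarith
qed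

lemma gd_iter_learns_first_feature:
  fixes ov :: "nat \<Rightarrow> real^'d"
  assumes orth: "orthonormal_family ov" and adm: "\<forall>z\<in>set S1. admissible_sample ov z"
    and S1: "S1 \<noteq> []"
    and third: "real (length S1) \<le> 3 * real (length (filter (\<lambda>z. snd z = 1) S1))"
    and norm_W0: "\<forall>i\<in>{1..k}. norm (W0 i) \<le> r" and a: "\<forall>i\<in>{1..k}. a i \<in> {1, -1}"
    and r: "r \<le> eta" and small_eta: "real k * real T * eta \<le> 1/4"
    and t: "t \<le> T" and i: "i \<in> {1..k}" and w0: "in_W0plus ov (W0 i)" and ai: "a i = 1"
  shows "real t * eta / 9 \<le> ov 1 \<bullet> gd_iter k eta S1 a W0 t i"
    and "\<forall>j\<in>{1..CARD('d)}. j \<noteq> 1 \<longrightarrow> ov j \<bullet> gd_iter k eta S1 a W0 t i \<le> r"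
    and "\<forall>x. (x, 1) \<in> set S1 \<longrightarrow> patch (gd_iter k eta S1 a W0 t i) x = ov 1"
proof -
  have eta: "0 \<le> eta"
    using norm_W0 i r by (meson norm_ge_zero order_trans)
  have mono: "in_W0plus ov (gd_iter k eta S1 a W0 t i)"
    "\<forall>j\<in>{2..CARD('d)}. ov j \<bullet> gd_iter k eta S1 a W0 t i \<le> ov j \<bullet> W0 i"
    using gd_iter_mono_coordinates[where ?W0.0 = W0 and i = i and a = a, OF orth adm w0 ai eta]
    by blast+
  have "ov 1 \<bullet> W0 i + real t * eta / 9 \<le> ov 1 \<bullet> gd_iter k eta S1 a W0 t i"
    using a norm_W0 r
    by (intro gd_iter_first_coordinate_growth[where ?W0.0 = W0 and i = i and a = a,
          OF orth adm w0 ai _ _ eta small_eta S1 third t]) auto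
  moreover have "0 < ov 1 \<bullet> W0 i"
    using w0 by (simp add: in_W0plus_def inner_commute)
  ultimately show "real t * eta / 9 \<le> ov 1 \<bullet> gd_iter k eta S1 a W0 t i"
    by linarith
  have W0_bound: "ov j \<bullet> W0 i \<le> r" if "j \<in> {1..CARD('d)}" for j
  proof -
    have "ov j \<bullet> W0 i \<le> norm (ov j) * norm (W0 i)"
      by (rule norm_cauchy_schwarz)
    also have "\<dots> = norm (W0 i)"
      using orth that unfolding orthonormal_family_def by (simp add: norm_eq_sqrt_inner)
    finally show ?thesis
      using norm_W0 i by fastforce
  qed
  show "\<forall>j\<in>{1..CARD('d)}. j \<noteq> 1 \<longrightarrow> ov j \<bullet> gd_iter k eta S1 a W0 t i \<le> r"
  proof (intro ballI impI)
    fix j assume j: "j \<in> {1..CARD('d)}" "j \<noteq> 1"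
    then have "ov j \<bullet> gd_iter k eta S1 a W0 t i \<le> ov j \<bullet> W0 i"
      using mono(2) by auto
    then show "ov j \<bullet> gd_iter k eta S1 a W0 t i \<le> r"
      using W0_bound[OF j(1)] by linarith
  qed
  show "\<forall>x. (x, 1) \<in> set S1 \<longrightarrow> patch (gd_iter k eta S1 a W0 t i) x = ov 1"
    using adm mono(1) patch_positive_sample by blast
qed

lemma map_pmf_take_replicate_pmf:
  "j \<le> m \<Longrightarrow> map_pmf (take j) (replicate_pmf m p) = replicate_pmf j p"
proof (induction m arbitrary: j)
  case (Suc m)
  show ?case
  proof (cases j)
    case (Suc j')
    then have "map_pmf (take j) (replicate_pmf (Suc m) p) =
        bind_pmf p (\<lambda>x. map_pmf (\<lambda>xs. x # xs) (map_pmf (take j') (replicate_pmf m p)))"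
      by (simp add: map_pmf_def[symmetric] map_bind_pmf pmf.map_comp o_def)
    then show ?thesis
      using Suc.IH[of j'] Suc.prems Suc by (simp add: map_pmf_def)
  qed simp
qed simp

lemma map_pmf_map_replicate_pmf:
  "map_pmf (map f) (replicate_pmf m p) = replicate_pmf m (map_pmf f p)"
proof (induction m)
  case (Suc m)
  have "map_pmf (map f) (replicate_pmf (Suc m) p) =
      bind_pmf p (\<lambda>x. map_pmf (\<lambda>xs. f x # xs) (map_pmf (map f) (replicate_pmf m p)))"
    by (simp add: map_pmf_def[symmetric] map_bind_pmf pmf.map_comp o_def)
  then show ?case
    unfolding Suc.IH replicate_pmf.simps(2)[of m "map_pmf f p"] bind_map_pmf
    by (simp add: map_pmf_def)
qed simp

lemma map_pmf_positive_label_data_dist: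
  "map_pmf (\<lambda>z. snd z = 1) (data_dist n ov) = bernoulli_pmf (1/2)"
proof -
  have "map_pmf (\<lambda>z. snd z = 1) (data_dist n ov) = map_pmf (\<lambda>y. y = 1) (pmf_of_set {1, -1::real})"
    unfolding data_dist_def by (simp add: map_pmf_def bind_assoc_pmf bind_return_pmf)
  also have "\<dots> = bernoulli_pmf (1/2)"
  proof (rule pmf_eqI)
    fix b :: bool
    have "{1, -1::real} \<inter> ((\<lambda>y. y = 1) -` {b}) = (if b then {1} else {-1})"
      by auto
    then show "pmf (map_pmf (\<lambda>y. y = 1) (pmf_of_set {1, -1::real})) b = pmf (bernoulli_pmf (1/2)) b"
      by (simp add: pmf_map measure_pmf_of_set)
  qed
  finally show ?thesis .
qed

lemma positive_label_count_binomial: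
  assumes "m1 \<le> m"
  shows "map_pmf (\<lambda>S. length (filter (\<lambda>z. snd z = 1) (take m1 S))) (replicate_pmf m (data_dist n ov))
     = binomial_pmf m1 (1/2)"
proof -
  let ?P = "\<lambda>z. snd z = (1::real)"
  have count_eq: "(\<lambda>S. length (filter ?P (take m1 S))) = (length \<circ> filter id) \<circ> (map ?P \<circ> take m1)"
    by (auto simp: filter_map o_def)
  have "map_pmf (\<lambda>S. length (filter ?P (take m1 S))) (replicate_pmf m (data_dist n ov)) =
      map_pmf (length \<circ> filter id) (map_pmf (map ?P) (map_pmf (take m1) (replicate_pmf m (data_dist n ov))))"
    unfolding count_eq pmf.map_comp by (rule refl)
  also have "\<dots> = map_pmf (length \<circ> filter id) (replicate_pmf m1 (bernoulli_pmf (1/2)))"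
    by (simp only: map_pmf_take_replicate_pmf[OF assms] map_pmf_map_replicate_pmf
        map_pmf_positive_label_data_dist)
  also have "\<dots> = binomial_pmf m1 (1/2)"
    by (rule binomial_pmf_altdef[symmetric]) auto
  finally show ?thesis .
qed

lemma binomial_pmf_half_lower_third:
  "1 - exp (- real m / 18) \<le> measure_pmf.prob (binomial_pmf m (1/2)) {x. real m \<le> 3 * real x}"
proof (cases "m = 0")
  case False
  let ?M = "binomial_pmf m (1/2)"
  have "measure_pmf.prob ?M {x. real x \<le> real m * (1/2) - real m / 6} \<le> exp (-2 * (real m / 6)\<^sup>2 / real m)"
    by (rule binomial_distribution.prob_le) (use False in \<open>auto simp: binomial_distribution_def\<close>)
  also have "\<dots> = exp (- real m / 18)"
    using False by (simp add: power2_eq_square field_simps)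
  finally have lower: "measure_pmf.prob ?M {x. real x \<le> real m * (1/2) - real m / 6} \<le> exp (- real m / 18)" .
  have "measure_pmf.prob ?M (UNIV - {x. real m \<le> 3 * real x})
      \<le> measure_pmf.prob ?M {x. real x \<le> real m * (1/2) - real m / 6}"
    by (intro measure_pmf.finite_measure_mono) auto
  then show ?thesis
    using lower measure_pmf.prob_compl[of "{x. real m \<le> 3 * real x}" ?M] by simp
qed simp

lemma prob_third_positive_labels:
  assumes "m1 \<le> m"
  shows "1 - exp (- real m1 / 18) \<le> measure_pmf.prob (replicate_pmf m (data_dist n ov))
     {S. real m1 \<le> 3 * real (length (filter (\<lambda>z. snd z = 1) (take m1 S)))}"
  using binomial_pmf_half_lower_third[of m1] positive_label_count_binomial[OF assms, of n ov, symmetric]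
  by (simp add: vimage_def)

lemma step_size_horizon_bound:
  assumes "0 \<le> eta" "eta \<le> 1 / (4 * real k * (real T + 1))"
  shows "real k * real T * eta \<le> 1/4"
proof (cases "k = 0")
  case False
  then have "eta * (4 * real k * (real T + 1)) \<le> 1"
    using assms(2) by (simp add: le_divide_eq)
  moreover have "real k * real T * eta \<le> real k * (real T + 1) * eta"
    using assms(1) by (intro mult_right_mono mult_left_mono) auto
  ultimately show ?thesis
    by (simp add: algebra_simps)
qed simp

theorem lemma5p3:
  fixes ov :: "nat \<Rightarrow> real^'d" and n k m T1 :: nat and eta1 r :: real
  assumes d3: "CARD('d) \<ge> 3"
    and n1: "n \<ge> 1"
    and orth: "\<forall>i\<in>{1..CARD('d)}. \<forall>j\<in>{1..CARD('d)}. ov i \<bullet> ov j = (if i = j then 1 else 0)"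
    and eta: "eta1 \<le> 1 / (4 * real k * (real T1 + 1))"
    and r: "0 < r" "r \<le> eta1 / 200"
  shows "measure_pmf.prob (replicate_pmf m (data_dist n ov))
     {S. \<forall>W0 a0. (\<forall>i\<in>{1..k}. norm (W0 i) = r) \<longrightarrow> (\<forall>i\<in>{1..k}. a0 i \<in> {1, -1}) \<longrightarrow>
          (\<forall>t \<le> T1. \<forall>i\<in>{1..k}. in_W0plus ov (W0 i) \<and> a0 i = 1 \<longrightarrow>
             (let w = gd_iter k eta1 (first_half S) a0 W0 t i in
                ov 1 \<bullet> w \<ge> real t * eta1 / 9
              \<and> (\<forall>j\<in>{1..CARD('d)}. j \<noteq> 1 \<longrightarrow> ov j \<bullet> w \<le> r)
              \<and> (\<forall>x. (x, 1) \<in> set (first_half S) \<longrightarrow> patch w x = ov 1)))}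
     \<ge> 1 - 4 * exp (- real m / 36)"
  (is "measure_pmf.prob ?D ?E \<ge> _")
proof (cases "m = 0")
  case False
  define m1 where "m1 = nat \<lceil>real m / 2\<rceil>"
  let ?G = "{S. real m1 \<le> 3 * real (length (filter (\<lambda>z. snd z = 1) (take m1 S)))}"
  have m1: "0 < m1" "m1 \<le> m" "real m \<le> 2 * real m1"
    using False unfolding m1_def by linarith+
  have "S \<in> ?E" if S: "S \<in> set_pmf ?D" "S \<in> ?G" for S
  proof -
    let ?S1 = "take m1 S"
    have length_S: "length S = m"
      using S(1) by (simp add: set_replicate_pmf)
    have first_half_S: "first_half S = ?S1"
      using length_S by (simp add: first_half_def m1_def)
    have "length ?S1 = m1"
      using m1(2) length_S by simp
    then have S1: "?S1 \<noteq> []" "real (length ?S1) \<le> 3 * real (length (filter (\<lambda>z. snd z = 1) ?S1))"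
      using m1(1) S(2) by auto
    have adm: "\<forall>z\<in>set ?S1. admissible_sample ov z"
      using S(1) admissible_sample_data_dist[OF d3 n1]
      by (auto simp: set_replicate_pmf dest: in_set_takeD)
    have orthn: "orthonormal_family ov"
      using orth unfolding orthonormal_family_def .
    have small_eta: "real k * real T1 * eta1 \<le> 1/4"
      using r eta by (intro step_size_horizon_bound) auto
    have r_eta: "r \<le> eta1"
      using r by simp
    note learns = gd_iter_learns_first_feature[OF orthn adm S1 _ _ r_eta small_eta]
    show ?thesis
      unfolding mem_Collect_eq first_half_S Let_def
    proof (intro allI impI ballI, elim conjE)
      fix W0 and a0 :: "nat \<Rightarrow> real" and t i
      assume "\<forall>i\<in>{1..k}. norm (W0 i) = r" and "\<forall>i\<in>{1..k}. a0 i \<in> {1, -1}" and "t \<le> T1"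
        and "i \<in> {1..k}" and "in_W0plus ov (W0 i)" and "a0 i = 1"
      then show "real t * eta1 / 9 \<le> ov 1 \<bullet> gd_iter k eta1 ?S1 a0 W0 t i
        \<and> (\<forall>j\<in>{1..CARD('d)}. j \<noteq> 1 \<longrightarrow> ov j \<bullet> gd_iter k eta1 ?S1 a0 W0 t i \<le> r)
        \<and> (\<forall>x. (x, 1) \<in> set ?S1 \<longrightarrow> patch (gd_iter k eta1 ?S1 a0 W0 t i) x = ov 1)"
        using learns[where ?W0.0 = W0 and a = a0] by simp
    qed
  qed
  then have "measure_pmf.prob ?D ?G \<le> measure_pmf.prob ?D ?E"
    by (intro measure_pmf.finite_measure_mono_AE) (simp_all add: AE_measure_pmf_iff)
  moreover have "1 - exp (- real m1 / 18) \<le> measure_pmf.prob ?D ?G"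
    using prob_third_positive_labels[OF m1(2)] .
  moreover have "exp (- real m1 / 18) \<le> exp (- real m / 36)"
    using m1(3) by simp
  moreover have "0 \<le> exp (- real m / 36)"
    by simp
  ultimately show ?thesis
    by linarith
next
  case True
  then have "1 - 4 * exp (- real m / 36) \<le> 0"
    by simp
  then show ?thesis
    using measure_nonneg[of ?D ?E] by linarith
qed

end
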